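(* Let $S$ be a string of length $n$ and $1\le\tau\le n$. Let $\mathrm{ID}:[1..n-\tau+1]\to\mathbb{Z}$ be any function such that $\mathrm{ID}(j)$ depends only on $S[j..j+\tau-1]$, i.e. $S[j..j+\tau-1]=S[k..k+\tau-1]$ implies $\mathrm{ID}(j)=\mathrm{ID}(k)$. Define $$P=\left\{j\in[1..n-\tau]\;\middle|\;\exists \ell\in[j-\tau+1..j]:\ \mathrm{ID}(j)=\min_{k\in[\ell..\ell+\tau-1]}\mathrm{ID}(k)\right\}.$$ Then $P$ is a $(2\tau,2\tau)$-partitioning set of $S$.
   Context: $[a..b]=\{a,\dots,b\}$. A prefix of length $y\ge1$ of a string $W$ is a period of $W$ if $W[x]=W[x+y]$ for all $1\le x\le |W|-y$; $\rho_W$ is the shortest period length, and $W$ is periodic if $\rho_W\le |W|/2$. For $1\le\tau'\le\delta\le n$, a set $P\subseteq[n]$ is a $(\tau',\delta)$-partitioning set of $S$ if (1) for any $i,j\in[1+\delta..n-\delta]$ with $S[i-\delta..i+\delta]=S[j-\delta..j+\delta]$ we have $i\in P\Leftrightarrow j\in P$; and (2) for any two consecutive elements $p_i<p_{i+1}$ of $P\cup\{1,n+1\}$, either $p_{i+1}-p_i\le\tau'$, or $p_{i+1}-p_i>\tau'$ and $u=S[p_i..p_{i+1}-1]$ is periodic with $\rho_u\le\tau'$. *)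

theory Defs
  imports Main
begin

text \<open>Strings are lists; positions are 1-based: the character S[x] is S ! (x - 1).\<close>

definition substr :: "'a list \<Rightarrow> nat \<Rightarrow> nat \<Rightarrow> 'a list" where
  "substr S a b = take (Suc b - a) (drop (a - 1) S)"
  \<comment> \<open>S[a..b], 1-based, inclusive (empty if b < a)\<close>

definition has_period :: "'a list \<Rightarrow> nat \<Rightarrow> bool" where
  "has_period W y \<longleftrightarrow> 1 \<le> y \<and> y \<le> length W \<and>
     (\<forall>x. 1 \<le> x \<and> x \<le> length W - y \<longrightarrow> W ! (x - 1) = W ! (x + y - 1))"

definition min_period :: "'a list \<Rightarrow> nat" where
  "min_period W = (LEAST y. has_period W y)"

definition periodic :: "'a list \<Rightarrow> bool" where
  "periodic W \<longleftrightarrow> 2 * min_period W \<le> length W"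

definition consecutive :: "nat set \<Rightarrow> nat \<Rightarrow> nat \<Rightarrow> bool" where
  "consecutive Q p q \<longleftrightarrow> p \<in> Q \<and> q \<in> Q \<and> p < q \<and> (\<forall>r\<in>Q. \<not> (p < r \<and> r < q))"

definition partitioning_set :: "'a list \<Rightarrow> nat \<Rightarrow> nat \<Rightarrow> nat set \<Rightarrow> bool" where
  "partitioning_set S \<tau>' \<delta> P \<longleftrightarrow>
     P \<subseteq> {1..length S} \<and>
     (\<forall>i j. i \<in> {1 + \<delta>..length S - \<delta>} \<and> j \<in> {1 + \<delta>..length S - \<delta>} \<and>
            substr S (i - \<delta>) (i + \<delta>) = substr S (j - \<delta>) (j + \<delta>) \<longrightarrow>
            (i \<in> P \<longleftrightarrow> j \<in> P)) \<and>
     (\<forall>p q. consecutive (P \<union> {1, length S + 1}) p q \<longrightarrow>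
            q - p \<le> \<tau>' \<or>
            (q - p > \<tau>' \<and> periodic (substr S p (q - 1)) \<and> min_period (substr S p (q - 1)) \<le> \<tau>'))"

end

(*
  The 2\<tau> - 1 windows of length \<tau> containing a position i all lie inside its 2\<tau>-context
  S[i - 2\<tau>..i + 2\<tau>], and membership of i in P only depends on the IDs of these windows;
  hence positions with equal contexts are treated alike. Conversely, if two consecutive
  elements p < q of P \<union> {1, n + 1} were more than 2\<tau> apart, the position of the minimal
  ID among p + 1, ..., p + \<tau> would lie in P strictly between them.
*)
theory Submission
  imports Defs
begin

lemma substr_substr:
  assumes "1 \<le> a" and "1 \<le> c" and "a + d \<le> b + 1"
  shows "substr (substr S a b) c d = substr S (a + c - 1) (a + d - 1)"
  using assms unfolding substr_def by (simp add: drop_take min_def add.commute)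

lemma substr_eq_infix:
  assumes "substr S a b = substr T a' b'"
    and "1 \<le> a" and "1 \<le> a'" and "1 \<le> c"
    and "a + d \<le> b + 1" and "a' + d \<le> b' + 1"
  shows "substr S (a + c - 1) (a + d - 1) = substr T (a' + c - 1) (a' + d - 1)"
  using assms substr_substr by metis

lemma image_shift_eq:
  fixes a b m :: nat
  assumes "\<And>d. d < m \<Longrightarrow> f (a + d) = g (b + d)"
  shows "f ` {a..<a + m} = g ` {b..<b + m}"
proof -
  have shift: "h ` {k..<k + m} = (\<lambda>d. h (k + d)) ` {..<m}" for h :: "nat \<Rightarrow> 'b" and k
  proof -
    have "{k..<k + m} = (+) k ` {..<m}"
      by (simp add: atLeast0LessThan[symmetric] add.commute)
    then show ?thesis
      by (simp add: image_image)
  qed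
  show ?thesis
    unfolding shift using assms by (intro image_cong) auto
qed

definition window_min_positions :: "nat \<Rightarrow> nat \<Rightarrow> (nat \<Rightarrow> int) \<Rightarrow> nat set" where
  "window_min_positions n \<tau> ID =
     {j \<in> {1..n - \<tau>}. \<exists>l \<in> {j + 1 - \<tau>..j}. 1 \<le> l \<and> ID j = Min (ID ` {l..l + \<tau> - 1})}"

lemma window_min_positions_subset: "window_min_positions n \<tau> ID \<subseteq> {1..n}"
  unfolding window_min_positions_def by auto

lemma window_argmin_in_window_min_positions:
  assumes "1 \<le> \<tau>" and "1 \<le> l" and "l + 2 * \<tau> \<le> n + 1"
  obtains k where "k \<in> {l..<l + \<tau>}" and "k \<in> window_min_positions n \<tau> ID"
proof -
  have "finite (ID ` {l..l + \<tau> - 1})" and "ID ` {l..l + \<tau> - 1} \<noteq> {}"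
    using assms(1) by auto
  then obtain k where k: "k \<in> {l..l + \<tau> - 1}" "ID k = Min (ID ` {l..l + \<tau> - 1})"
    by (metis (no_types, lifting) Min_in imageE)
  then have "k \<in> window_min_positions n \<tau> ID"
    using assms unfolding window_min_positions_def by (auto intro!: bexI[of _ l])
  moreover have "k \<in> {l..<l + \<tau>}"
    using k(1) assms(1) by auto
  ultimately show thesis
    using that by blast
qed

lemma consecutive_window_min_positions_gap:
  assumes "1 \<le> \<tau>" and "consecutive (window_min_positions n \<tau> ID \<union> {1, n + 1}) p q"
  shows "q - p \<le> 2 * \<tau>"
proof (rule ccontr)
  assume long_gap: "\<not> q - p \<le> 2 * \<tau>"
  moreover have "1 \<le> p" and "q \<le> n + 1"
    using assms(2) window_min_positions_subset unfolding consecutive_def by fastforce+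
  ultimately have "1 \<le> p + 1" and "p + 1 + 2 * \<tau> \<le> n + 1"
    by auto
  then obtain k where "k \<in> {p + 1..<p + 1 + \<tau>}" and "k \<in> window_min_positions n \<tau> ID"
    by (rule window_argmin_in_window_min_positions[OF assms(1)])
  moreover have "p < k \<and> k < q"
    using \<open>k \<in> {p + 1..<p + 1 + \<tau>}\<close> long_gap by auto
  ultimately show False
    using assms(2) unfolding consecutive_def by blast
qed

lemma window_min_positions_transfer:
  assumes "1 \<le> \<tau>" and "\<tau> \<le> i" and "\<tau> \<le> j" and "j \<le> n - \<tau>"
    and same_ID: "\<And>d. d < 2 * \<tau> - 1 \<Longrightarrow> ID (i + 1 - \<tau> + d) = ID (j + 1 - \<tau> + d)"
    and "i \<in> window_min_positions n \<tau> ID"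
  shows "j \<in> window_min_positions n \<tau> ID"
proof -
  obtain l where l: "l \<in> {i + 1 - \<tau>..i}" "ID i = Min (ID ` {l..l + \<tau> - 1})"
    using assms(6) unfolding window_min_positions_def by auto
  define e where "e = l - (i + 1 - \<tau>)"
  have l_eq: "l = i + 1 - \<tau> + e" and "e < \<tau>"
    using l(1) assms(1,2) unfolding e_def by auto
  have "ID ` {l..<l + \<tau>} = ID ` {j + 1 - \<tau> + e..<j + 1 - \<tau> + e + \<tau>}"
    unfolding l_eq
  proof (rule image_shift_eq)
    fix d assume "d < \<tau>"
    then have "e + d < 2 * \<tau> - 1"
      using \<open>e < \<tau>\<close> by simp
    then show "ID (i + 1 - \<tau> + e + d) = ID (j + 1 - \<tau> + e + d)"
      using same_ID by (simp add: add.assoc)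
  qed
  moreover have "ID i = ID j"
  proof -
    have "ID (i + 1 - \<tau> + (\<tau> - 1)) = ID (j + 1 - \<tau> + (\<tau> - 1))"
      using assms(1) by (intro same_ID) simp
    moreover have "i + 1 - \<tau> + (\<tau> - 1) = i" and "j + 1 - \<tau> + (\<tau> - 1) = j"
      using assms(1-3) by auto
    ultimately show ?thesis
      by (simp only:)
  qed
  moreover have "{m..m + \<tau> - 1} = {m..<m + \<tau>}" for m
    using assms(1) by auto
  ultimately have "ID j = Min (ID ` {j + 1 - \<tau> + e..j + 1 - \<tau> + e + \<tau> - 1})"
    using l(2) by simp
  moreover have "j + 1 - \<tau> + e \<in> {j + 1 - \<tau>..j}" and "1 \<le> j + 1 - \<tau> + e"
    using \<open>e < \<tau>\<close> assms(3) by auto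
  ultimately show ?thesis
    using assms(3,4) unfolding window_min_positions_def by auto
qed

lemma window_IDs_eq_if_contexts_eq:
  assumes ID_local: "\<forall>j \<in> {1..length S - \<tau> + 1}. \<forall>k \<in> {1..length S - \<tau> + 1}.
           substr S j (j + \<tau> - 1) = substr S k (k + \<tau> - 1) \<longrightarrow> ID j = ID k"
    and "1 \<le> \<tau>"
    and "i \<in> {1 + \<delta>..length S - \<delta>}" and "j \<in> {1 + \<delta>..length S - \<delta>}"
    and context_eq: "substr S (i - \<delta>) (i + \<delta>) = substr S (j - \<delta>) (j + \<delta>)"
    and "e + \<tau> \<le> 2 * \<delta> + 1"
  shows "ID (i - \<delta> + e) = ID (j - \<delta> + e)"
proof -
  have "substr S (i - \<delta> + Suc e - 1) (i - \<delta> + (e + \<tau>) - 1) =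
        substr S (j - \<delta> + Suc e - 1) (j - \<delta> + (e + \<tau>) - 1)"
    using assms(3-6) by (intro substr_eq_infix[OF context_eq]) auto
  then have "substr S (i - \<delta> + e) (i - \<delta> + e + \<tau> - 1) = substr S (j - \<delta> + e) (j - \<delta> + e + \<tau> - 1)"
    by (simp add: add.assoc)
  moreover have "i - \<delta> + e \<in> {1..length S - \<tau> + 1}" and "j - \<delta> + e \<in> {1..length S - \<tau> + 1}"
    using assms(2-4,6) by auto
  ultimately show ?thesis
    using ID_local by blast
qed

lemma window_min_positions_respects_contexts:
  assumes ID_local: "\<forall>j \<in> {1..length S - \<tau> + 1}. \<forall>k \<in> {1..length S - \<tau> + 1}.
           substr S j (j + \<tau> - 1) = substr S k (k + \<tau> - 1) \<longrightarrow> ID j = ID k"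
    and "1 \<le> \<tau>"
    and i: "i \<in> {1 + 2 * \<tau>..length S - 2 * \<tau>}" and j: "j \<in> {1 + 2 * \<tau>..length S - 2 * \<tau>}"
    and context_eq: "substr S (i - 2 * \<tau>) (i + 2 * \<tau>) = substr S (j - 2 * \<tau>) (j + 2 * \<tau>)"
    and "i \<in> window_min_positions (length S) \<tau> ID"
  shows "j \<in> window_min_positions (length S) \<tau> ID"
proof (rule window_min_positions_transfer[OF assms(2) _ _ _ _ assms(6)])
  fix d assume "d < 2 * \<tau> - 1"
  then have "ID (i - 2 * \<tau> + (\<tau> + 1 + d)) = ID (j - 2 * \<tau> + (\<tau> + 1 + d))"
    by (intro window_IDs_eq_if_contexts_eq[OF ID_local assms(2) i j context_eq]) simp
  moreover have "i - 2 * \<tau> + (\<tau> + 1 + d) = i + 1 - \<tau> + d"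
    and "j - 2 * \<tau> + (\<tau> + 1 + d) = j + 1 - \<tau> + d"
    using i j by auto
  ultimately show "ID (i + 1 - \<tau> + d) = ID (j + 1 - \<tau> + d)"
    by (simp only:)
qed (use i j in auto)

theorem lemma9:
  fixes S :: "'a list" and \<tau> :: nat and ID :: "nat \<Rightarrow> int"
  assumes "1 \<le> \<tau>" and "\<tau> \<le> length S"
    and "\<forall>j \<in> {1..length S - \<tau> + 1}. \<forall>k \<in> {1..length S - \<tau> + 1}.
           substr S j (j + \<tau> - 1) = substr S k (k + \<tau> - 1) \<longrightarrow> ID j = ID k"
  shows "partitioning_set S (2 * \<tau>) (2 * \<tau>)
           {j \<in> {1..length S - \<tau>}. \<exists>l \<in> {j + 1 - \<tau>..j}. 1 \<le> l \<and>
               ID j = Min (ID ` {l..l + \<tau> - 1})}"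
proof -
  let ?P = "window_min_positions (length S) \<tau> ID"
  have "partitioning_set S (2 * \<tau>) (2 * \<tau>) ?P"
    unfolding partitioning_set_def
  proof (intro conjI allI impI)
    fix i j
    assume "i \<in> {1 + 2 * \<tau>..length S - 2 * \<tau>} \<and> j \<in> {1 + 2 * \<tau>..length S - 2 * \<tau>} \<and>
      substr S (i - 2 * \<tau>) (i + 2 * \<tau>) = substr S (j - 2 * \<tau>) (j + 2 * \<tau>)"
    then show "i \<in> ?P \<longleftrightarrow> j \<in> ?P"
      using window_min_positions_respects_contexts[OF assms(3,1)] by (metis (no_types, lifting))
  qed (use window_min_positions_subset consecutive_window_min_positions_gap[OF assms(1)] in auto)
  then show ?thesis
    unfolding window_min_positions_def .
qed

end
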